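(* Fix a positive integer $r$ and a positive integer $s$, and let $x_1,\dots,x_s,y_1,\dots,y_s,X,Y$ be real numbers with $r<x_i\leq y_i$ for all $i\in\{1,\dots,s\}$. If $Y\geq\max(x_1,\dots,x_s)$ and $\displaystyle X\prod_{i=1}^s x_i<Y\prod_{i=1}^s y_i$, then $\displaystyle (X-r)\prod_{i=1}^s(x_i-r)<(Y-r)\prod_{i=1}^s(y_i-r)$. *)

theory Defs
  imports Complex_Main
begin

end

theory Submission
  imports Defs
begin

text \<open>Write \<open>P = \<Prod> x\<^sub>i\<close>, \<open>Q = \<Prod> y\<^sub>i\<close>, \<open>A = \<Prod> (x\<^sub>i - r)\<close>, \<open>B = \<Prod> (y\<^sub>i - r)\<close>.
  By induction on the number of factors one shows \<open>(Y Q - r P) A \<le> (Y - r) B P\<close> whenever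
  \<open>r < x\<^sub>i \<le> y\<^sub>i\<close> and \<open>x\<^sub>i \<le> Y\<close>. Adding one pair of factors \<open>x \<le> y\<close> changes the two sides by
  amounts differing by \<open>r (y - x) (Y Q - x P) \<ge> 0\<close>. The hypothesis \<open>X P < Y Q\<close> gives
  \<open>(X - r) P A < (Y Q - r P) A\<close>, and dividing the chained inequality by \<open>P > 0\<close> finishes the proof.\<close>

lemma shifted_product_step:
  fixes Y Q P x y r :: "'a :: linordered_idom"
  assumes "x \<le> y" "0 \<le> x" "x \<le> Y" "P \<le> Q" "0 \<le> P" "0 \<le> r"
  shows "(Y * y * Q - r * (x * P)) * (x - r) \<le> (Y * Q - r * P) * (y - r) * x"
proof -
  have "x * P \<le> Y * Q"
    using assms by (meson mult_mono order_trans)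
  then have "0 \<le> r * ((y - x) * (Y * Q - x * P))"
    using assms by simp
  moreover have "(Y * Q - r * P) * (y - r) * x - (Y * y * Q - r * (x * P)) * (x - r)
      = r * ((y - x) * (Y * Q - x * P))"
    by (simp add: algebra_simps)
  ultimately show ?thesis
    by (simp add: le_diff_eq)
qed

lemma shifted_product_ineq:
  fixes x y :: "'i \<Rightarrow> 'a :: linordered_idom" and Y r :: 'a
  assumes "finite S" "0 \<le> r"
    and "\<And>i. i \<in> S \<Longrightarrow> r < x i \<and> x i \<le> y i \<and> x i \<le> Y"
  shows "(Y * (\<Prod>i\<in>S. y i) - r * (\<Prod>i\<in>S. x i)) * (\<Prod>i\<in>S. x i - r)
         \<le> (Y - r) * (\<Prod>i\<in>S. y i - r) * (\<Prod>i\<in>S. x i)"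
  using assms(1,3)
proof (induction S rule: finite_induct)
  case empty
  then show ?case by simp
next
  case (insert a S)
  define P where "P = (\<Prod>i\<in>S. x i)"
  define Q where "Q = (\<Prod>i\<in>S. y i)"
  define A where "A = (\<Prod>i\<in>S. x i - r)"
  define B where "B = (\<Prod>i\<in>S. y i - r)"
  have IH: "(Y * Q - r * P) * A \<le> (Y - r) * B * P"
    using insert unfolding P_def Q_def A_def B_def by auto
  have a: "r < x a" "x a \<le> y a" "x a \<le> Y" "0 \<le> x a"
    using insert.prems assms(2) by (auto intro: order.trans less_imp_le)
  have x_nonneg: "0 \<le> x i" if "i \<in> S" for i
    using insert.prems[of i] that assms(2) by auto
  have "0 \<le> A"
    unfolding A_def using insert.prems by (intro prod_nonneg) (auto simp: less_imp_le)
  moreover have "0 \<le> P" "P \<le> Q"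
    unfolding P_def Q_def using x_nonneg insert.prems by (auto intro: prod_nonneg prod_mono)
  ultimately have "(Y * y a * Q - r * (x a * P)) * (x a - r) * A
      \<le> ((Y * Q - r * P) * A) * ((y a - r) * x a)"
    using mult_right_mono[OF shifted_product_step[of "x a" "y a" Y P Q r] \<open>0 \<le> A\<close>]
      a assms(2) by (simp add: algebra_simps)
  also have "\<dots> \<le> ((Y - r) * B * P) * ((y a - r) * x a)"
    using IH a by (intro mult_right_mono) auto
  finally show ?case
    using insert.hyps unfolding P_def Q_def A_def B_def by (simp add: algebra_simps)
qed

theorem lemma2p1:
  fixes r s :: nat and x y :: "nat \<Rightarrow> real" and X Y :: real
  assumes "r \<ge> 1" and "s \<ge> 1"
    and "\<And>i. i \<in> {1..s} \<Longrightarrow> real r < x i \<and> x i \<le> y i"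
    and "Y \<ge> Max (x ` {1..s})"
    and "X * (\<Prod>i=1..s. x i) < Y * (\<Prod>i=1..s. y i)"
  shows "(X - real r) * (\<Prod>i=1..s. (x i - real r)) < (Y - real r) * (\<Prod>i=1..s. (y i - real r))"
proof -
  define P where "P = (\<Prod>i=1..s. x i)"
  define A where "A = (\<Prod>i=1..s. x i - real r)"
  define B where "B = (\<Prod>i=1..s. y i - real r)"
  have x_le_Y: "x i \<le> Y" if "i \<in> {1..s}" for i
    using assms(4) that by (meson Max_ge finite_atLeastAtMost finite_imageI image_eqI order_trans)
  have "0 < A"
    unfolding A_def using assms(3) by (intro prod_pos) auto
  moreover have "0 < P"
    unfolding P_def using assms(3) by (intro prod_pos) (metis of_nat_0_le_iff le_less_trans)
  ultimately have "((X - real r) * A) * P < (Y * (\<Prod>i=1..s. y i) - real r * P) * A"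
    using assms(5) unfolding P_def by (simp add: algebra_simps)
  also have "\<dots> \<le> ((Y - real r) * B) * P"
    unfolding P_def A_def B_def
    by (rule shifted_product_ineq) (use assms(3) x_le_Y in auto)
  finally show ?thesis
    using \<open>0 < P\<close> unfolding A_def B_def by simp
qed

end
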